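(* Let $U$ be a nonempty set, let $f:\{T,F\}^n\to\{T,F\}$ be a Boolean function, and let $\pi_1,\dots,\pi_n$ be partitions of $U$. For $u,u'\in U$ and each $i$, set $v_i(u,u')=T$ if $(u,u')\in\operatorname{dit}(\pi_i)$ and $v_i(u,u')=F$ if $(u,u')\in\operatorname{indit}(\pi_i)$. Let $G$ be the simple undirected graph on $U$ in which distinct $u,u'$ are adjacent iff $f(v_1(u,u'),\dots,v_n(u,u'))=F$, and let $f(\pi_1,\dots,\pi_n)$ denote the partition of $U$ into the connected components of $G$. Let $$S=\bigcup_{\substack{(t_1,\dots,t_n)\in\{T,F\}^n\\ f(t_1,\dots,t_n)=F}}\ \bigcap_{i=1}^n A_i^{t_i},\qquad A_i^{T}=\operatorname{dit}(\pi_i),\ A_i^{F}=\operatorname{indit}(\pi_i),$$ (the set obtained from the disjunctive normal form of $\lnot f$ by replacing each unnegated variable $P_i$ by $\operatorname{dit}(\pi_i)$, each negated variable $\lnot P_i$ by $\operatorname{indit}(\pi_i)$, disjunction by union and conjunction by intersection). Then the equivalence relation $\operatorname{indit}(f(\pi_1,\dots,\pi_n))$ equals the reflexive-symmetric-transitive closure $\overline{S}$ of $S$ in $U\times U$; equivalently, $f(\pi_1,\dots,\pi_n)$ is the set of equivalence classes of $\overline{S}$.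
   Context: A partition of $U$ is a set of pairwise disjoint nonempty subsets of $U$ (blocks) whose union is $U$. For a partition $\pi$, $\operatorname{indit}(\pi)=\{(u,u')\in U\times U: u,u' \text{ lie in the same block of }\pi\}$ and $\operatorname{dit}(\pi)=U\times U\setminus\operatorname{indit}(\pi)$. The reflexive-symmetric-transitive closure $\overline{S}$ of $S\subseteq U\times U$ is the intersection of all equivalence relations on $U$ containing $S$. *)

theory Defs
  imports Main "HOL-Library.Disjoint_Sets"
begin

definition indit :: "'a set \<Rightarrow> 'a set set \<Rightarrow> ('a \<times> 'a) set" where
  "indit U P = {(u, u'). u \<in> U \<and> u' \<in> U \<and> (\<exists>B\<in>P. u \<in> B \<and> u' \<in> B)}"

definition dit :: "'a set \<Rightarrow> 'a set set \<Rightarrow> ('a \<times> 'a) set" where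
  "dit U P = U \<times> U - indit U P"

definition rst_closure :: "'a set \<Rightarrow> ('a \<times> 'a) set \<Rightarrow> ('a \<times> 'a) set" where
  "rst_closure U S = \<Inter> {R. equiv U R \<and> S \<subseteq> R}"

text \<open>Truth-value vector v(u,u') for partitions pis 0 .. pis (n-1): True = T iff distinction.\<close>
definition dit_vec :: "'a set \<Rightarrow> nat \<Rightarrow> (nat \<Rightarrow> 'a set set) \<Rightarrow> 'a \<Rightarrow> 'a \<Rightarrow> bool list" where
  "dit_vec U n pis u u' = map (\<lambda>i. (u, u') \<in> dit U (pis i)) [0..<n]"

definition graph_edges :: "'a set \<Rightarrow> nat \<Rightarrow> (bool list \<Rightarrow> bool) \<Rightarrow> (nat \<Rightarrow> 'a set set) \<Rightarrow> ('a \<times> 'a) set" where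
  "graph_edges U n f pis =
     {(u, u'). u \<in> U \<and> u' \<in> U \<and> u \<noteq> u' \<and> \<not> f (dit_vec U n pis u u')}"

definition f_partition :: "'a set \<Rightarrow> nat \<Rightarrow> (bool list \<Rightarrow> bool) \<Rightarrow> (nat \<Rightarrow> 'a set set) \<Rightarrow> 'a set set" where
  "f_partition U n f pis = U // ((graph_edges U n f pis)\<^sup>*)"

definition A_set :: "'a set \<Rightarrow> 'a set set \<Rightarrow> bool \<Rightarrow> ('a \<times> 'a) set" where
  "A_set U P t = (if t then dit U P else indit U P)"

definition S_set :: "'a set \<Rightarrow> nat \<Rightarrow> (bool list \<Rightarrow> bool) \<Rightarrow> (nat \<Rightarrow> 'a set set) \<Rightarrow> ('a \<times> 'a) set" where
  "S_set U n f pis =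
     (\<Union>ts \<in> {ts. length ts = n \<and> \<not> f ts}. (U \<times> U) \<inter> (\<Inter>i \<in> {..<n}. A_set U (pis i) (ts ! i)))"

end

theory Submission
  imports Defs
begin

text \<open>Every pair \<open>(u, u')\<close> of \<open>U \<times> U\<close> lies in exactly one of the intersections
  \<open>\<Inter>\<^sub>i A_i^(t_i)\<close>, namely the one indexed by its own truth-value vector \<open>v(u, u')\<close>.
  Hence \<open>S\<close> consists of the pairs with \<open>f(v(u, u')) = F\<close>: it is the edge relation of \<open>G\<close>
  together with part of the diagonal. Since \<open>v\<close> is symmetric, so is \<open>S\<close>, and the smallest
  equivalence relation on \<open>U\<close> containing a symmetric relation is its reflexive-transitive
  closure restricted to \<open>U\<close>, i.e. connectivity in \<open>G\<close>.\<close>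

lemma equiv_rtrancl_restrict:
  assumes "sym E"
  shows "equiv U (E\<^sup>* \<inter> U \<times> U)"
proof (rule equivI)
  show "refl_on U (E\<^sup>* \<inter> U \<times> U)"
    by (auto simp: refl_on_def)
  show "E\<^sup>* \<inter> U \<times> U \<subseteq> U \<times> U"
    by blast
  show "sym (E\<^sup>* \<inter> U \<times> U)"
    by (intro sym_Int sym_rtrancl assms) (auto intro: symI)
  show "trans (E\<^sup>* \<inter> U \<times> U)"
    by (intro trans_Int trans_rtrancl) (auto intro: transI)
qed

lemma rst_closure_eq_rtrancl:
  assumes "E \<subseteq> U \<times> U" and "sym E"
  shows "rst_closure U E = E\<^sup>* \<inter> U \<times> U"
proof
  show "rst_closure U E \<subseteq> E\<^sup>* \<inter> U \<times> U"
    unfolding rst_closure_def using equiv_rtrancl_restrict[OF \<open>sym E\<close>] assms(1) by blast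
  show "E\<^sup>* \<inter> U \<times> U \<subseteq> rst_closure U E"
    unfolding rst_closure_def
  proof (intro Inter_greatest subsetI, clarify)
    fix R x y
    assume R: "equiv U R" "E \<subseteq> R" and "(x, y) \<in> E\<^sup>*" "x \<in> U"
    from \<open>(x, y) \<in> E\<^sup>*\<close> show "(x, y) \<in> R"
    proof (induction rule: rtrancl_induct)
      case base
      show ?case using R(1) \<open>x \<in> U\<close> by (simp add: equiv_def refl_on_def)
    next
      case (step y z)
      then show ?case using R by (meson equiv_def subsetD transD)
    qed
  qed
qed

lemma quotient_rtrancl_restrict:
  assumes "E \<subseteq> U \<times> U"
  shows "U // E\<^sup>* = U // (E\<^sup>* \<inter> U \<times> U)"
proof -
  have "E\<^sup>* `` U = U"
    using assms by (intro Image_closed_trancl) blast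
  then have "E\<^sup>* `` {x} = (E\<^sup>* \<inter> U \<times> U) `` {x}" if "x \<in> U" for x
    using that by blast
  then show ?thesis
    unfolding quotient_def by (intro SUP_cong) simp_all
qed

lemma indit_quotient:
  assumes "equiv U R"
  shows "indit U (U // R) = R"
proof -
  have sub: "R \<subseteq> U \<times> U"
    using assms by (simp add: equiv_def refl_on_def)
  have closed: "(u, v) \<in> R" if "B \<in> U // R" and "u \<in> B" and "v \<in> B" for B u v
    using that assms by (auto simp: quotient_def dest: equiv_class_eq_iff[THEN iffD1])
  have covered: "\<exists>B \<in> U // R. u \<in> B \<and> v \<in> B" if "(u, v) \<in> R" for u v
  proof
    have "u \<in> U"
      using that sub by blast
    then show "R `` {u} \<in> U // R"
      by (rule quotientI)
    show "u \<in> R `` {u} \<and> v \<in> R `` {u}"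
      using that equiv_class_self[OF assms \<open>u \<in> U\<close>] by simp
  qed
  show ?thesis
    unfolding indit_def using sub by (auto dest: closed covered)
qed

lemma dit_vec_swap: "dit_vec U n pis u v = dit_vec U n pis v u"
  unfolding dit_vec_def dit_def indit_def by auto

lemma mem_Inter_A_set_iff:
  assumes "length ts = n" and "u \<in> U" and "v \<in> U"
  shows "(u, v) \<in> (\<Inter>i \<in> {..<n}. A_set U (pis i) (ts ! i)) \<longleftrightarrow> ts = dit_vec U n pis u v"
proof -
  have "(u, v) \<in> A_set U (pis i) t \<longleftrightarrow> t = ((u, v) \<in> dit U (pis i))" for i t
    using assms(2,3) by (cases t) (auto simp: A_set_def dit_def)
  then have "(u, v) \<in> (\<Inter>i \<in> {..<n}. A_set U (pis i) (ts ! i)) \<longleftrightarrow>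
      (\<forall>i<n. ts ! i = ((u, v) \<in> dit U (pis i)))"
    by auto
  also have "\<dots> \<longleftrightarrow> ts = dit_vec U n pis u v"
    by (simp add: dit_vec_def list_eq_iff_nth_eq assms(1))
  finally show ?thesis .
qed

lemma S_set_eq: "S_set U n f pis = {(u, v). u \<in> U \<and> v \<in> U \<and> \<not> f (dit_vec U n pis u v)}"
proof -
  have "(u, v) \<in> S_set U n f pis \<longleftrightarrow> u \<in> U \<and> v \<in> U \<and> \<not> f (dit_vec U n pis u v)" for u v
  proof -
    have "length (dit_vec U n pis u v) = n"
      by (simp add: dit_vec_def)
    then show ?thesis
      unfolding S_set_def using mem_Inter_A_set_iff[of _ n u U v pis] by auto
  qed
  then show ?thesis
    by auto
qed

lemma S_set_subset: "S_set U n f pis \<subseteq> U \<times> U"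
  by (auto simp: S_set_eq)

lemma sym_S_set: "sym (S_set U n f pis)"
  by (auto simp: S_set_eq dit_vec_swap intro: symI)

lemma graph_edges_eq_S_set_diff_Id: "graph_edges U n f pis = S_set U n f pis - Id"
  by (auto simp: graph_edges_def S_set_eq)

theorem mainTheorem5:
  fixes U :: "'a set" and n :: nat and f :: "bool list \<Rightarrow> bool" and pis :: "nat \<Rightarrow> 'a set set"
  assumes "U \<noteq> {}"
    and "\<And>i. i < n \<Longrightarrow> partition_on U (pis i)"
  shows "indit U (f_partition U n f pis) = rst_closure U (S_set U n f pis)
         \<and> f_partition U n f pis = U // rst_closure U (S_set U n f pis)"
proof -
  let ?S = "S_set U n f pis"
  have closure: "rst_closure U ?S = ?S\<^sup>* \<inter> U \<times> U"
    by (rule rst_closure_eq_rtrancl[OF S_set_subset sym_S_set])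
  have "(graph_edges U n f pis)\<^sup>* = ?S\<^sup>*"
    by (simp add: graph_edges_eq_S_set_diff_Id rtrancl_r_diff_Id)
  then have partition: "f_partition U n f pis = U // rst_closure U ?S"
    unfolding f_partition_def closure by (simp add: quotient_rtrancl_restrict[OF S_set_subset])
  have "equiv U (rst_closure U ?S)"
    unfolding closure by (rule equiv_rtrancl_restrict[OF sym_S_set])
  then show ?thesis
    unfolding partition by (simp add: indit_quotient)
qed

end
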